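(* Let $\pi:H(\underline\kappa)\to\mathrm{End}_{\mathbb{C}}(V)$ be a representation and $\upsilon_0,\upsilon_n\in\mathbb{C}^*$. Define, in $\mathbb{C}(x)\otimes\mathrm{End}(V)$, $$K_0^V(x)=\frac{\pi(T_0^{-1})+(\upsilon_0^{-1}-\upsilon_0)x-x^2\pi(T_0)}{\kappa_0^{-1}(1-\kappa_0\upsilon_0x)(1+\kappa_0\upsilon_0^{-1}x)},\quad R_i^V(x)=\frac{\pi(T_i^{-1})-x\pi(T_i)}{\kappa^{-1}(1-\kappa^2x)}\ (1\le i<n),$$ $$K_n^V(x)=\frac{\pi(T_n^{-1})+(\upsilon_n^{-1}-\upsilon_n)x-x^2\pi(T_n)}{\kappa_n^{-1}(1-\kappa_n\upsilon_nx)(1+\kappa_n\upsilon_n^{-1}x)}.$$ Then, as rational functions of the spectral parameters: $K_0^V(x)R_1^V(xy)K_0^V(y)R_1^V(y/x)=R_1^V(y/x)K_0^V(y)R_1^V(xy)K_0^V(x)$; $R_i^V(x)R_{i+1}^V(xy)R_i^V(y)=R_{i+1}^V(y)R_i^V(xy)R_{i+1}^V(x)$ ($1\le i<n-1$); $K_n^V(y)R_{n-1}^V(xy)K_n^V(x)R_{n-1}^V(x/y)=R_{n-1}^V(x/y)K_n^V(x)R_{n-1}^V(xy)K_n^V(y)$; $K_0^V(x)K_0^V(x^{-1})=\mathrm{Id}_V=K_n^V(x)K_n^V(x^{-1})$, $R_i^V(x)R_i^V(x^{-1})=\mathrm{Id}_V$ ($1\le i<n$); $[K_0^V(x),R_i^V(y)]=0$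 ($2\le i<n$), $[K_n^V(x),R_i^V(y)]=0$ ($1\le i<n-1$), $[R_i^V(x),R_j^V(y)]=0$ ($|i-j|\ge2$), $[K_0^V(x),K_n^V(y)]=0$. Moreover $K_0^V(0)=\kappa_0\pi(T_0^{-1})$, $R_i^V(0)=\kappa\pi(T_i^{-1})$, $K_n^V(0)=\kappa_n\pi(T_n^{-1})$, and $K_0^V(1)=R_i^V(1)=K_n^V(1)=\mathrm{Id}_V$.
   Context: Fix $n\ge2$ and $\underline\kappa=(\kappa_0,\kappa_1,\ldots,\kappa_n)\in(\mathbb{C}^* )^{n+1}$ with $\kappa_1=\cdots=\kappa_{n-1}=:\kappa$. The affine Hecke algebra $H(\underline\kappa)$ of type $\widetilde C_n$ is the unital complex algebra with generators $T_0,\ldots,T_n$, subject to the braid relations $T_0T_1T_0T_1=T_1T_0T_1T_0$, $T_{n-1}T_nT_{n-1}T_n=T_nT_{n-1}T_nT_{n-1}$, $T_iT_{i+1}T_i=T_{i+1}T_iT_{i+1}$ ($1\le i<n-1$), $T_iT_j=T_jT_i$ ($0\le i,j\le n$, $|i-j|>1$), and the quadratic relations $(T_j-\kappa_j)(T_j+\kappa_j^{-1})=0$ ($0\le j\le n$). *)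

theory Defs
  imports Complex_Main
begin

text \<open>A complex vector space V is modelled by a type 'v with an addition (ab_group_add)
  and a scalar multiplication sc :: complex => 'v => 'v satisfying the vector space axioms.
  Endomorphisms are linear maps 'v => 'v, products are compositions.\<close>

definition hkap :: "nat \<Rightarrow> complex \<Rightarrow> complex \<Rightarrow> complex \<Rightarrow> nat \<Rightarrow> complex" where
  "hkap n k0 k kn j = (if j = 0 then k0 else if j = n then kn else k)"

text \<open>T :: nat => ('v => 'v), T j = pi(T_j) for 0 <= j <= n, defines a representation of
  the affine Hecke algebra H(kappa) of type C~_n on V iff the operators are linear and
  satisfy the defining relations.\<close>
definition is_affHeckeC_rep ::
  "(complex \<Rightarrow> 'v::ab_group_add \<Rightarrow> 'v) \<Rightarrow> nat \<Rightarrow> complex \<Rightarrow> complex \<Rightarrow> complex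
    \<Rightarrow> (nat \<Rightarrow> 'v \<Rightarrow> 'v) \<Rightarrow> bool" where
  "is_affHeckeC_rep sc n k0 k kn T \<longleftrightarrow>
     vector_space sc \<and>
     (\<forall>j\<le>n. Vector_Spaces.linear sc sc (T j)) \<and>
     T 0 \<circ> T 1 \<circ> T 0 \<circ> T 1 = T 1 \<circ> T 0 \<circ> T 1 \<circ> T 0 \<and>
     T (n-1) \<circ> T n \<circ> T (n-1) \<circ> T n = T n \<circ> T (n-1) \<circ> T n \<circ> T (n-1) \<and>
     (\<forall>i. 1 \<le> i \<and> i < n - 1 \<longrightarrow> T i \<circ> T (i+1) \<circ> T i = T (i+1) \<circ> T i \<circ> T (i+1)) \<and>
     (\<forall>i j. i \<le> n \<and> j \<le> n \<and> (i + 1 < j \<or> j + 1 < i) \<longrightarrow> T i \<circ> T j = T j \<circ> T i) \<and>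
     (\<forall>j\<le>n. (\<lambda>v. T j v - sc (hkap n k0 k kn j) v) \<circ> (\<lambda>v. T j v + sc (inverse (hkap n k0 k kn j)) v)
             = (\<lambda>v. 0))"

definition Kden :: "complex \<Rightarrow> complex \<Rightarrow> complex \<Rightarrow> complex" where
  "Kden kj u x = inverse kj * (1 - kj * u * x) * (1 + kj * inverse u * x)"

definition Rden :: "complex \<Rightarrow> complex \<Rightarrow> complex" where
  "Rden k x = inverse k * (1 - k\<^sup>2 * x)"

definition Kop :: "(complex \<Rightarrow> 'v::ab_group_add \<Rightarrow> 'v) \<Rightarrow> ('v \<Rightarrow> 'v) \<Rightarrow> complex \<Rightarrow> complex
    \<Rightarrow> complex \<Rightarrow> 'v \<Rightarrow> 'v" where
  "Kop sc Tj kj u x = (\<lambda>v. sc (inverse (Kden kj u x))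
      (inv Tj v + sc ((inverse u - u) * x) v - sc (x\<^sup>2) (Tj v)))"

definition Rop :: "(complex \<Rightarrow> 'v::ab_group_add \<Rightarrow> 'v) \<Rightarrow> ('v \<Rightarrow> 'v) \<Rightarrow> complex
    \<Rightarrow> complex \<Rightarrow> 'v \<Rightarrow> 'v" where
  "Rop sc Ti k x = (\<lambda>v. sc (inverse (Rden k x)) (inv Ti v - sc x (Ti v)))"

end

theory Submission
  imports Defs
begin

text \<open>Because \<open>T\<^sub>j\<^sup>-\<^sup>1 = T\<^sub>j - (\<kappa>\<^sub>j - \<kappa>\<^sub>j\<^sup>-\<^sup>1)\<close>, each of \<open>K\<^sub>0\<^sup>V(x)\<close>, \<open>R\<^sub>i\<^sup>V(x)\<close>, \<open>K\<^sub>n\<^sup>V(x)\<close> is an operator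
  \<open>\<alpha> T\<^sub>j + \<beta>\<close> in a single generator \<open>T\<^sub>j\<close>. By the quadratic relation two such operators in the
  same generator compose to another one, which yields unitarity; operators in commuting generators
  commute. The Yang--Baxter and reflection equations involve two generators satisfying a braid
  relation of length \<open>3\<close> resp. \<open>4\<close>: applied to a vector \<open>v\<close>, both sides lie in the span of the
  images of \<open>v\<close> under the six resp. eight reduced words of the dihedral group, which is stable
  under both generators, and comparing coefficients leaves polynomial identities in the spectral
  parameters.\<close>

definition poly1_op :: "('a \<Rightarrow> 'b::ab_group_add \<Rightarrow> 'b) \<Rightarrow> ('b \<Rightarrow> 'b) \<Rightarrow> 'a \<Rightarrow> 'a \<Rightarrow> 'b \<Rightarrow> 'b" where
  "poly1_op scale a \<alpha> \<beta> = (\<lambda>w. scale \<alpha> (a w) + scale \<beta> w)"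

locale hecke_generator = vector_space scale
  for scale :: "'a::field \<Rightarrow> 'b::ab_group_add \<Rightarrow> 'b" (infixr \<open>*s\<close> 75) +
  fixes a :: "'b \<Rightarrow> 'b" and d :: 'a
  assumes hom_add: "a (x + y) = a x + a y" and hom_scale: "a (c *s x) = c *s a x"
    and quadratic: "a (a x) = d *s a x + x"
begin

lemma hom_diff: "a (x - y) = a x - a y"
  using hom_add[of "x - y" y] by (simp add: algebra_simps)

lemma poly1_op_comp:
  "poly1_op scale a \<alpha> \<beta> \<circ> poly1_op scale a \<gamma> \<delta> =
    poly1_op scale a (\<alpha>*\<delta> + \<beta>*\<gamma> + d*\<alpha>*\<gamma>) (\<alpha>*\<gamma> + \<beta>*\<delta>)"
  by (rule ext)
    (simp add: poly1_op_def hom_add hom_scale quadratic scale_right_distrib scale_left_distrib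
      algebra_simps)

lemma poly1_op_id: "poly1_op scale a 0 1 = id"
  by (simp add: poly1_op_def fun_eq_iff)

lemma inv_eq_poly1_op: "inv a = poly1_op scale a 1 (- d)"
proof (rule inv_unique_comp)
  show "a \<circ> poly1_op scale a 1 (- d) = id"
    by (rule ext) (simp add: poly1_op_def hom_diff hom_scale quadratic)
  show "poly1_op scale a 1 (- d) \<circ> a = id"
    by (rule ext) (simp add: poly1_op_def quadratic)
qed

end

lemma hecke_generator_of_quadratic_relation:
  fixes scale :: "'a::field \<Rightarrow> 'b::ab_group_add \<Rightarrow> 'b"
  assumes "vector_space scale" "Vector_Spaces.linear scale scale a" "c \<noteq> 0"
    and quad: "(\<lambda>v. a v - scale c v) \<circ> (\<lambda>v. a v + scale (inverse c) v) = (\<lambda>v. 0)"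
  shows "hecke_generator scale a (c - inverse c)"
proof -
  interpret vector_space scale by fact
  have add: "a (x + y) = a x + a y" and scl: "a (scale r x) = scale r (a x)" for x y r
    using assms(2) unfolding Vector_Spaces.linear_iff by auto
  have "a (a x) = scale (c - inverse c) (a x) + x" for x
  proof -
    have "a (a x + scale (inverse c) x) - scale c (a x + scale (inverse c) x) = 0"
      using fun_cong[OF quad, of x] by simp
    then show ?thesis
      using \<open>c \<noteq> 0\<close> by (simp add: add scl scale_right_distrib scale_left_diff_distrib algebra_simps)
  qed
  then show ?thesis
    by unfold_locales (simp_all add: add scl)
qed

locale hecke_pair = A: hecke_generator scale a da + B: hecke_generator scale b db
  for scale :: "'a::field \<Rightarrow> 'b::ab_group_add \<Rightarrow> 'b" (infixr \<open>*s\<close> 75) and a da b db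

lemma (in hecke_pair) poly1_op_commute:
  assumes "\<And>x. a (b x) = b (a x)"
  shows "poly1_op scale a \<alpha> \<beta> \<circ> poly1_op scale b \<gamma> \<delta> =
    poly1_op scale b \<gamma> \<delta> \<circ> poly1_op scale a \<alpha> \<beta>"
  by (rule ext)
    (simp add: poly1_op_def A.hom_add A.hom_scale B.hom_add B.hom_scale assms algebra_simps)

locale hecke_pair_B2 = hecke_pair +
  assumes braid4: "a (b (a (b x))) = b (a (b (a x)))"
begin

definition B2_comb :: "'b \<Rightarrow> 'a \<Rightarrow> 'a \<Rightarrow> 'a \<Rightarrow> 'a \<Rightarrow> 'a \<Rightarrow> 'a \<Rightarrow> 'a \<Rightarrow> 'a \<Rightarrow> 'b" where
  "B2_comb v c0 c1 c2 c3 c4 c5 c6 c7 = c0 *s v + c1 *s a v + c2 *s b v + c3 *s a (b v)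
    + c4 *s b (a v) + c5 *s a (b (a v)) + c6 *s b (a (b v)) + c7 *s b (a (b (a v)))"

lemma poly1_op_a_B2_comb:
  "poly1_op scale a \<alpha> \<beta> (B2_comb v c0 c1 c2 c3 c4 c5 c6 c7) =
   B2_comb v (\<alpha>*c1 + \<beta>*c0) (\<alpha>*(c0 + da*c1) + \<beta>*c1) (\<alpha>*c3 + \<beta>*c2) (\<alpha>*(c2 + da*c3) + \<beta>*c3)
     (\<alpha>*c5 + \<beta>*c4) (\<alpha>*(c4 + da*c5) + \<beta>*c5) (\<alpha>*c7 + \<beta>*c6) (\<alpha>*(c6 + da*c7) + \<beta>*c7)"
  unfolding B2_comb_def poly1_op_def
  by (simp add: A.hom_add A.hom_scale B.hom_add B.hom_scale A.quadratic braid4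
      scale_left_distrib scale_right_distrib)
    (simp add: algebra_simps)

lemma poly1_op_b_B2_comb:
  "poly1_op scale b \<alpha> \<beta> (B2_comb v c0 c1 c2 c3 c4 c5 c6 c7) =
   B2_comb v (\<alpha>*c2 + \<beta>*c0) (\<alpha>*c4 + \<beta>*c1) (\<alpha>*(c0 + db*c2) + \<beta>*c2) (\<alpha>*c6 + \<beta>*c3)
     (\<alpha>*(c1 + db*c4) + \<beta>*c4) (\<alpha>*c7 + \<beta>*c5) (\<alpha>*(c3 + db*c6) + \<beta>*c6) (\<alpha>*(c5 + db*c7) + \<beta>*c7)"
  unfolding B2_comb_def poly1_op_def
  by (simp add: A.hom_add A.hom_scale B.hom_add B.hom_scale B.quadratic braid4
      scale_left_distrib scale_right_distrib)
    (simp add: algebra_simps)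

lemma B2_comb_cong:
  "c0 = d0 \<Longrightarrow> c1 = d1 \<Longrightarrow> c2 = d2 \<Longrightarrow> c3 = d3 \<Longrightarrow> c4 = d4 \<Longrightarrow> c5 = d5 \<Longrightarrow> c6 = d6 \<Longrightarrow> c7 = d7
    \<Longrightarrow> B2_comb v c0 c1 c2 c3 c4 c5 c6 c7 = B2_comb v d0 d1 d2 d3 d4 d5 d6 d7"
  by simp

lemma B2_comb_unit: "B2_comb v 1 0 0 0 0 0 0 0 = v"
  by (simp add: B2_comb_def)

text \<open>The normalisations \<open>f\<close>, \<open>g\<close> are arbitrary since both sides contain the same four factors;
  writing \<open>y = x z\<close> makes all coefficient identities polynomial.\<close>

lemma reflection_equation:
  fixes f g :: "'a \<Rightarrow> 'a" and e :: 'a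
  defines "K \<equiv> \<lambda>x. poly1_op scale a (f x * (1 - x\<^sup>2)) (f x * (e * x - da))"
    and "R \<equiv> \<lambda>x. poly1_op scale b (g x * (1 - x)) (- (g x * db))"
  assumes "x \<noteq> 0"
  shows "K x \<circ> R (x*y) \<circ> K y \<circ> R (y/x) = R (y/x) \<circ> K y \<circ> R (x*y) \<circ> K x"
proof (rule ext)
  fix v
  define z where "z = y / x"
  have yx: "y / x = z" and y: "y = x * z" and xy: "x * y = x * x * z"
    using \<open>x \<noteq> 0\<close> by (simp_all add: z_def)
  have "K x (R (x*x*z) (K (x*z) (R z (B2_comb v 1 0 0 0 0 0 0 0)))) =
        R z (K (x*z) (R (x*x*z) (K x (B2_comb v 1 0 0 0 0 0 0 0))))"
    unfolding K_def R_def poly1_op_a_B2_comb poly1_op_b_B2_comb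
    by (rule B2_comb_cong) algebra+
  then show "(K x \<circ> R (x*y) \<circ> K y \<circ> R (y/x)) v = (R (y/x) \<circ> K y \<circ> R (x*y) \<circ> K x) v"
    by (simp only: comp_def B2_comb_unit yx xy y[symmetric])
qed

end

locale hecke_pair_A2 = hecke_pair scale a d b d
  for scale :: "'a::field \<Rightarrow> 'b::ab_group_add \<Rightarrow> 'b" (infixr \<open>*s\<close> 75) and a b d +
  assumes braid3: "a (b (a x)) = b (a (b x))"
begin

definition A2_comb :: "'b \<Rightarrow> 'a \<Rightarrow> 'a \<Rightarrow> 'a \<Rightarrow> 'a \<Rightarrow> 'a \<Rightarrow> 'a \<Rightarrow> 'b" where
  "A2_comb v c0 c1 c2 c3 c4 c5 = c0 *s v + c1 *s a v + c2 *s b v + c3 *s a (b v)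
    + c4 *s b (a v) + c5 *s b (a (b v))"

lemma poly1_op_a_A2_comb:
  "poly1_op scale a \<alpha> \<beta> (A2_comb v c0 c1 c2 c3 c4 c5) =
   A2_comb v (\<alpha>*c1 + \<beta>*c0) (\<alpha>*(c0 + d*c1) + \<beta>*c1) (\<alpha>*c3 + \<beta>*c2) (\<alpha>*(c2 + d*c3) + \<beta>*c3)
     (\<alpha>*c5 + \<beta>*c4) (\<alpha>*(c4 + d*c5) + \<beta>*c5)"
  unfolding A2_comb_def poly1_op_def
  by (simp add: A.hom_add A.hom_scale B.hom_add B.hom_scale A.quadratic B.quadratic braid3
      scale_left_distrib scale_right_distrib)
    (simp add: algebra_simps)

lemma poly1_op_b_A2_comb:
  "poly1_op scale b \<alpha> \<beta> (A2_comb v c0 c1 c2 c3 c4 c5) =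
   A2_comb v (\<alpha>*c2 + \<beta>*c0) (\<alpha>*c4 + \<beta>*c1) (\<alpha>*(c0 + d*c2) + \<beta>*c2) (\<alpha>*c5 + \<beta>*c3)
     (\<alpha>*(c1 + d*c4) + \<beta>*c4) (\<alpha>*(c3 + d*c5) + \<beta>*c5)"
  unfolding A2_comb_def poly1_op_def
  by (simp add: A.hom_add A.hom_scale B.hom_add B.hom_scale A.quadratic B.quadratic braid3
      scale_left_distrib scale_right_distrib)
    (simp add: algebra_simps)

lemma A2_comb_cong:
  "c0 = d0 \<Longrightarrow> c1 = d1 \<Longrightarrow> c2 = d2 \<Longrightarrow> c3 = d3 \<Longrightarrow> c4 = d4 \<Longrightarrow> c5 = d5
    \<Longrightarrow> A2_comb v c0 c1 c2 c3 c4 c5 = A2_comb v d0 d1 d2 d3 d4 d5"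
  by simp

lemma A2_comb_unit: "A2_comb v 1 0 0 0 0 0 = v"
  by (simp add: A2_comb_def)

lemma yang_baxter_equation:
  fixes g :: "'a \<Rightarrow> 'a"
  defines "R \<equiv> \<lambda>c x. poly1_op scale c (g x * (1 - x)) (- (g x * d))"
  shows "R a x \<circ> R b (x*y) \<circ> R a y = R b y \<circ> R a (x*y) \<circ> R b x"
proof (rule ext)
  fix v
  have "R a x (R b (x*y) (R a y (A2_comb v 1 0 0 0 0 0))) =
        R b y (R a (x*y) (R b x (A2_comb v 1 0 0 0 0 0)))"
    unfolding R_def poly1_op_a_A2_comb poly1_op_b_A2_comb
    by (rule A2_comb_cong) algebra+
  then show "(R a x \<circ> R b (x*y) \<circ> R a y) v = (R b y \<circ> R a (x*y) \<circ> R b x) v"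
    by (simp add: A2_comb_unit)
qed

end

lemma Kop_eq_poly1_op:
  fixes sc :: "complex \<Rightarrow> 'v::ab_group_add \<Rightarrow> 'v"
  assumes "hecke_generator sc a (c - inverse c)"
  shows "Kop sc a c u x = poly1_op sc a (inverse (Kden c u x) * (1 - x\<^sup>2))
           (inverse (Kden c u x) * ((inverse u - u) * x - (c - inverse c)))"
proof -
  interpret hecke_generator sc a "c - inverse c" by fact
  show ?thesis
    by (rule ext) (simp add: Kop_def inv_eq_poly1_op poly1_op_def scale_right_distrib
        scale_right_diff_distrib scale_left_diff_distrib algebra_simps)
qed

lemma Rop_eq_poly1_op:
  fixes sc :: "complex \<Rightarrow> 'v::ab_group_add \<Rightarrow> 'v"
  assumes "hecke_generator sc a (c - inverse c)"
  shows "Rop sc a c x =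
    poly1_op sc a (inverse (Rden c x) * (1 - x)) (- (inverse (Rden c x) * (c - inverse c)))"
proof -
  interpret hecke_generator sc a "c - inverse c" by fact
  show ?thesis
    by (rule ext) (simp add: Rop_def inv_eq_poly1_op poly1_op_def scale_right_distrib
        scale_right_diff_distrib scale_left_diff_distrib algebra_simps)
qed

lemma Kop_unitary:
  fixes sc :: "complex \<Rightarrow> 'v::ab_group_add \<Rightarrow> 'v"
  assumes "hecke_generator sc a (c - inverse c)"
    and "c \<noteq> 0" "u \<noteq> 0" "x \<noteq> 0" "Kden c u x \<noteq> 0" "Kden c u (inverse x) \<noteq> 0"
  shows "Kop sc a c u x \<circ> Kop sc a c u (inverse x) = id"
proof -
  interpret hecke_generator sc a "c - inverse c" by fact
  define N where "N t = 1 - t\<^sup>2" for t :: complex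
  define M where "M t = (inverse u - u) * t - (c - inverse c)" for t
  have inv: "c * inverse c = 1" "u * inverse u = 1" "x * inverse x = 1"
    "Kden c u x * inverse (Kden c u x) = 1"
    "Kden c u (inverse x) * inverse (Kden c u (inverse x)) = 1"
    using assms(2-) by auto
  have "N x * N (inverse x) + M x * M (inverse x) = Kden c u x * Kden c u (inverse x)"
    unfolding N_def M_def Kden_def using inv(1-3) by algebra
  moreover have "N x * M (inverse x) + M x * N (inverse x) + (c - inverse c) * N x * N (inverse x) = 0"
    unfolding N_def M_def using inv(1-3) by algebra
  ultimately show ?thesis
    unfolding Kop_eq_poly1_op[OF assms(1)] poly1_op_comp poly1_op_id[symmetric]
      N_def[symmetric] M_def[symmetric]
    using inv(4,5) by (intro arg_cong2[where f = "poly1_op sc a"]) algebra+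
qed

lemma Rop_unitary:
  fixes sc :: "complex \<Rightarrow> 'v::ab_group_add \<Rightarrow> 'v"
  assumes "hecke_generator sc a (c - inverse c)"
    and "c \<noteq> 0" "x \<noteq> 0" "Rden c x \<noteq> 0" "Rden c (inverse x) \<noteq> 0"
  shows "Rop sc a c x \<circ> Rop sc a c (inverse x) = id"
proof -
  interpret hecke_generator sc a "c - inverse c" by fact
  have inv: "c * inverse c = 1" "x * inverse x = 1"
    "Rden c x * inverse (Rden c x) = 1"
    "Rden c (inverse x) * inverse (Rden c (inverse x)) = 1"
    using assms(2-) by auto
  have "(1 - x) * (1 - inverse x) + (c - inverse c)\<^sup>2 = Rden c x * Rden c (inverse x)"
    unfolding Rden_def using inv(1,2) by algebra
  then show ?thesis
    unfolding Rop_eq_poly1_op[OF assms(1)] poly1_op_comp poly1_op_id[symmetric]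
    using inv by (intro arg_cong2[where f = "poly1_op sc a"]) algebra+
qed

lemma Kop_at_0:
  fixes sc :: "complex \<Rightarrow> 'v::ab_group_add \<Rightarrow> 'v"
  assumes "vector_space sc" and "c \<noteq> 0"
  shows "Kop sc a c u 0 = (\<lambda>v. sc c (inv a v))"
proof -
  interpret vector_space sc by fact
  show ?thesis using assms(2) by (simp add: Kop_def Kden_def)
qed

lemma Rop_at_0:
  fixes sc :: "complex \<Rightarrow> 'v::ab_group_add \<Rightarrow> 'v"
  assumes "vector_space sc" and "c \<noteq> 0"
  shows "Rop sc a c 0 = (\<lambda>v. sc c (inv a v))"
proof -
  interpret vector_space sc by fact
  show ?thesis using assms(2) by (simp add: Rop_def Rden_def)
qed

lemma Kop_at_1:
  fixes sc :: "complex \<Rightarrow> 'v::ab_group_add \<Rightarrow> 'v"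
  assumes "hecke_generator sc a (c - inverse c)" and "c \<noteq> 0" "u \<noteq> 0" "Kden c u 1 \<noteq> 0"
  shows "Kop sc a c u 1 = id"
proof -
  interpret hecke_generator sc a "c - inverse c" by fact
  have "Kden c u 1 = (inverse u - u) - (c - inverse c)"
    unfolding Kden_def using assms(2,3) by (simp add: field_simps)
  then show ?thesis
    using assms(4) by (simp add: Kop_eq_poly1_op[OF assms(1)] poly1_op_id[symmetric])
qed

lemma Rop_at_1:
  fixes sc :: "complex \<Rightarrow> 'v::ab_group_add \<Rightarrow> 'v"
  assumes "hecke_generator sc a (c - inverse c)" and "c \<noteq> 0" "Rden c 1 \<noteq> 0"
  shows "Rop sc a c 1 = id"
proof -
  interpret hecke_generator sc a "c - inverse c" by fact
  have "Rden c 1 = - (c - inverse c)"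
    unfolding Rden_def using assms(2) by (simp add: field_simps power2_eq_square)
  then have "- (inverse (Rden c 1) * (c - inverse c)) = 1"
    using assms(3) by (simp add: field_simps)
  then show ?thesis
    by (simp add: Rop_eq_poly1_op[OF assms(1)] poly1_op_id[symmetric])
qed

locale affine_hecke_C_rep =
  fixes sc :: "complex \<Rightarrow> 'v::ab_group_add \<Rightarrow> 'v" and n :: nat and k0 k kn :: complex
    and T :: "nat \<Rightarrow> 'v \<Rightarrow> 'v" and u0 un :: complex
  assumes rep: "is_affHeckeC_rep sc n k0 k kn T" and two_le_n: "2 \<le> n"
    and k0_nonzero: "k0 \<noteq> 0" and k_nonzero: "k \<noteq> 0" and kn_nonzero: "kn \<noteq> 0"
    and u0_nonzero: "u0 \<noteq> 0" and un_nonzero: "un \<noteq> 0"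
begin

lemma vector_space: "vector_space sc"
  using rep by (simp add: is_affHeckeC_rep_def)

lemma hecke_generator_T:
  "j \<le> n \<Longrightarrow> hecke_generator sc (T j) (hkap n k0 k kn j - inverse (hkap n k0 k kn j))"
  using rep k0_nonzero k_nonzero kn_nonzero
  by (intro hecke_generator_of_quadratic_relation) (auto simp: is_affHeckeC_rep_def hkap_def)

lemma hecke_generator_T0: "hecke_generator sc (T 0) (k0 - inverse k0)"
  using hecke_generator_T[of 0] by (simp add: hkap_def)

lemma hecke_generator_Tn: "hecke_generator sc (T n) (kn - inverse kn)"
  using hecke_generator_T[of n] two_le_n by (simp add: hkap_def)

lemma hecke_generator_Ti: "0 < i \<Longrightarrow> i < n \<Longrightarrow> hecke_generator sc (T i) (k - inverse k)"
  using hecke_generator_T[of i] by (simp add: hkap_def)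

lemma T_commute:
  "i \<le> n \<Longrightarrow> j \<le> n \<Longrightarrow> i + 1 < j \<or> j + 1 < i \<Longrightarrow> T i (T j v) = T j (T i v)"
  using rep unfolding is_affHeckeC_rep_def by (metis comp_apply)

lemma hecke_pair_B2_T0: "hecke_pair_B2 sc (T 0) (k0 - inverse k0) (T 1) (k - inverse k)"
proof -
  have "T 0 \<circ> T 1 \<circ> T 0 \<circ> T 1 = T 1 \<circ> T 0 \<circ> T 1 \<circ> T 0"
    using rep by (simp add: is_affHeckeC_rep_def)
  then show ?thesis
    using hecke_generator_T0 hecke_generator_Ti[of 1] two_le_n
    by (intro hecke_pair_B2.intro hecke_pair.intro hecke_pair_B2_axioms.intro)
      (auto simp: fun_eq_iff)
qed

lemma hecke_pair_B2_Tn: "hecke_pair_B2 sc (T n) (kn - inverse kn) (T (n - 1)) (k - inverse k)"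
proof -
  have "T (n - 1) \<circ> T n \<circ> T (n - 1) \<circ> T n = T n \<circ> T (n - 1) \<circ> T n \<circ> T (n - 1)"
    using rep by (simp add: is_affHeckeC_rep_def)
  then show ?thesis
    using hecke_generator_Tn hecke_generator_Ti[of "n - 1"] two_le_n
    by (intro hecke_pair_B2.intro hecke_pair.intro hecke_pair_B2_axioms.intro)
      (auto simp: fun_eq_iff)
qed

lemma hecke_pair_A2_T:
  "0 < i \<Longrightarrow> i < n - 1 \<Longrightarrow> hecke_pair_A2 sc (T i) (T (i + 1)) (k - inverse k)"
  using rep hecke_generator_Ti[of i] hecke_generator_Ti[of "i + 1"]
  by (intro hecke_pair_A2.intro hecke_pair.intro hecke_pair_A2_axioms.intro)
    (auto simp: is_affHeckeC_rep_def fun_eq_iff)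

abbreviation K0 :: "complex \<Rightarrow> 'v \<Rightarrow> 'v" where "K0 \<equiv> Kop sc (T 0) k0 u0"
abbreviation Kn :: "complex \<Rightarrow> 'v \<Rightarrow> 'v" where "Kn \<equiv> Kop sc (T n) kn un"
abbreviation R :: "nat \<Rightarrow> complex \<Rightarrow> 'v \<Rightarrow> 'v" where "R i \<equiv> Rop sc (T i) k"

lemma K0_eq_poly1_op:
  "K0 x = poly1_op sc (T 0) (inverse (Kden k0 u0 x) * (1 - x\<^sup>2))
     (inverse (Kden k0 u0 x) * ((inverse u0 - u0) * x - (k0 - inverse k0)))"
  by (rule Kop_eq_poly1_op[OF hecke_generator_T0])

lemma Kn_eq_poly1_op:
  "Kn x = poly1_op sc (T n) (inverse (Kden kn un x) * (1 - x\<^sup>2))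
     (inverse (Kden kn un x) * ((inverse un - un) * x - (kn - inverse kn)))"
  by (rule Kop_eq_poly1_op[OF hecke_generator_Tn])

lemma R_eq_poly1_op:
  "0 < i \<Longrightarrow> i < n \<Longrightarrow>
    R i x = poly1_op sc (T i) (inverse (Rden k x) * (1 - x))
      (- (inverse (Rden k x) * (k - inverse k)))"
  by (rule Rop_eq_poly1_op[OF hecke_generator_Ti])

lemma reflection_equation_0:
  assumes "x \<noteq> 0"
  shows "K0 x \<circ> R 1 (x*y) \<circ> K0 y \<circ> R 1 (y/x) = R 1 (y/x) \<circ> K0 y \<circ> R 1 (x*y) \<circ> K0 x"
  using hecke_pair_B2.reflection_equation[OF hecke_pair_B2_T0 assms,
      where f = "\<lambda>x. inverse (Kden k0 u0 x)" and g = "\<lambda>x. inverse (Rden k x)"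
        and e = "inverse u0 - u0"]
    two_le_n
  by (simp add: K0_eq_poly1_op R_eq_poly1_op)

lemma reflection_equation_n:
  assumes "y \<noteq> 0"
  shows "Kn y \<circ> R (n-1) (x*y) \<circ> Kn x \<circ> R (n-1) (x/y) =
    R (n-1) (x/y) \<circ> Kn x \<circ> R (n-1) (x*y) \<circ> Kn y"
  using hecke_pair_B2.reflection_equation[OF hecke_pair_B2_Tn assms,
      where f = "\<lambda>x. inverse (Kden kn un x)" and g = "\<lambda>x. inverse (Rden k x)"
        and e = "inverse un - un"]
    two_le_n
  by (simp add: Kn_eq_poly1_op R_eq_poly1_op mult.commute[of x y])

lemma yang_baxter_equation:
  assumes "0 < i" "i < n - 1"
  shows "R i x \<circ> R (i+1) (x*y) \<circ> R i y = R (i+1) y \<circ> R i (x*y) \<circ> R (i+1) x"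
  using hecke_pair_A2.yang_baxter_equation[OF hecke_pair_A2_T[OF assms],
      where g = "\<lambda>x. inverse (Rden k x)"] assms
  by (simp add: R_eq_poly1_op)

lemma poly1_op_T_commute:
  assumes "i \<le> n" "j \<le> n" "i + 1 < j \<or> j + 1 < i"
  shows "poly1_op sc (T i) \<alpha> \<beta> \<circ> poly1_op sc (T j) \<gamma> \<delta> =
    poly1_op sc (T j) \<gamma> \<delta> \<circ> poly1_op sc (T i) \<alpha> \<beta>"
proof (rule hecke_pair.poly1_op_commute)
  show "hecke_pair sc (T i) (hkap n k0 k kn i - inverse (hkap n k0 k kn i))
      (T j) (hkap n k0 k kn j - inverse (hkap n k0 k kn j))"
    using assms by (intro hecke_pair.intro hecke_generator_T)
  show "T i (T j v) = T j (T i v)" for v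
    using assms by (rule T_commute)
qed

lemma K0_R_commute: "1 < i \<Longrightarrow> i < n \<Longrightarrow> K0 x \<circ> R i y = R i y \<circ> K0 x"
  by (simp add: K0_eq_poly1_op R_eq_poly1_op poly1_op_T_commute)

lemma Kn_R_commute: "0 < i \<Longrightarrow> i < n - 1 \<Longrightarrow> Kn x \<circ> R i y = R i y \<circ> Kn x"
  by (simp add: Kn_eq_poly1_op R_eq_poly1_op) (rule poly1_op_T_commute; linarith)

lemma R_R_commute:
  "0 < i \<Longrightarrow> i < n \<Longrightarrow> 0 < j \<Longrightarrow> j < n \<Longrightarrow> i + 2 \<le> j \<or> j + 2 \<le> i \<Longrightarrow>
    R i x \<circ> R j y = R j y \<circ> R i x"
  by (simp add: R_eq_poly1_op) (rule poly1_op_T_commute; linarith)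

lemma K0_Kn_commute: "K0 x \<circ> Kn y = Kn y \<circ> K0 x"
  using two_le_n by (simp add: K0_eq_poly1_op Kn_eq_poly1_op poly1_op_T_commute)

end

theorem mainTheorem6:
  fixes sc :: "complex \<Rightarrow> 'v::ab_group_add \<Rightarrow> 'v"
    and T :: "nat \<Rightarrow> 'v \<Rightarrow> 'v"
    and n :: nat and k0 k kn u0 un :: complex
  defines "K0 \<equiv> Kop sc (T 0) k0 u0"
    and "Kn \<equiv> Kop sc (T n) kn un"
    and "R \<equiv> (\<lambda>i. Rop sc (T i) k)"
  assumes "n \<ge> 2"
    and "k0 \<noteq> 0" and "k \<noteq> 0" and "kn \<noteq> 0" and "u0 \<noteq> 0" and "un \<noteq> 0"
    and "is_affHeckeC_rep sc n k0 k kn T"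
  shows
    "(\<forall>x y. x \<noteq> 0 \<and> y \<noteq> 0 \<and> Kden k0 u0 x \<noteq> 0 \<and> Kden k0 u0 y \<noteq> 0
        \<and> Rden k (x*y) \<noteq> 0 \<and> Rden k (y/x) \<noteq> 0 \<longrightarrow>
        K0 x \<circ> R 1 (x*y) \<circ> K0 y \<circ> R 1 (y/x) = R 1 (y/x) \<circ> K0 y \<circ> R 1 (x*y) \<circ> K0 x)
   \<and> (\<forall>i x y. 1 \<le> i \<and> i < n - 1 \<and> Rden k x \<noteq> 0 \<and> Rden k y \<noteq> 0 \<and> Rden k (x*y) \<noteq> 0 \<longrightarrow>
        R i x \<circ> R (i+1) (x*y) \<circ> R i y = R (i+1) y \<circ> R i (x*y) \<circ> R (i+1) x)
   \<and> (\<forall>x y. x \<noteq> 0 \<and> y \<noteq> 0 \<and> Kden kn un x \<noteq> 0 \<and> Kden kn un y \<noteq> 0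
        \<and> Rden k (x*y) \<noteq> 0 \<and> Rden k (x/y) \<noteq> 0 \<longrightarrow>
        Kn y \<circ> R (n-1) (x*y) \<circ> Kn x \<circ> R (n-1) (x/y) = R (n-1) (x/y) \<circ> Kn x \<circ> R (n-1) (x*y) \<circ> Kn y)
   \<and> (\<forall>x. x \<noteq> 0 \<and> Kden k0 u0 x \<noteq> 0 \<and> Kden k0 u0 (inverse x) \<noteq> 0 \<longrightarrow> K0 x \<circ> K0 (inverse x) = id)
   \<and> (\<forall>x. x \<noteq> 0 \<and> Kden kn un x \<noteq> 0 \<and> Kden kn un (inverse x) \<noteq> 0 \<longrightarrow> Kn x \<circ> Kn (inverse x) = id)
   \<and> (\<forall>i x. 1 \<le> i \<and> i < n \<and> x \<noteq> 0 \<and> Rden k x \<noteq> 0 \<and> Rden k (inverse x) \<noteq> 0 \<longrightarrow>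
        R i x \<circ> R i (inverse x) = id)
   \<and> (\<forall>i x y. 2 \<le> i \<and> i < n \<and> Kden k0 u0 x \<noteq> 0 \<and> Rden k y \<noteq> 0 \<longrightarrow> K0 x \<circ> R i y = R i y \<circ> K0 x)
   \<and> (\<forall>i x y. 1 \<le> i \<and> i < n - 1 \<and> Kden kn un x \<noteq> 0 \<and> Rden k y \<noteq> 0 \<longrightarrow> Kn x \<circ> R i y = R i y \<circ> Kn x)
   \<and> (\<forall>i j x y. 1 \<le> i \<and> i < n \<and> 1 \<le> j \<and> j < n \<and> (i + 2 \<le> j \<or> j + 2 \<le> i)
        \<and> Rden k x \<noteq> 0 \<and> Rden k y \<noteq> 0 \<longrightarrow> R i x \<circ> R j y = R j y \<circ> R i x)
   \<and> (\<forall>x y. Kden k0 u0 x \<noteq> 0 \<and> Kden kn un y \<noteq> 0 \<longrightarrow> K0 x \<circ> Kn y = Kn y \<circ> K0 x)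
   \<and> K0 0 = (\<lambda>v. sc k0 (inv (T 0) v))
   \<and> (\<forall>i. 1 \<le> i \<and> i < n \<longrightarrow> R i 0 = (\<lambda>v. sc k (inv (T i) v)))
   \<and> Kn 0 = (\<lambda>v. sc kn (inv (T n) v))
   \<and> (Kden k0 u0 1 \<noteq> 0 \<longrightarrow> K0 1 = id)
   \<and> (\<forall>i. 1 \<le> i \<and> i < n \<and> Rden k 1 \<noteq> 0 \<longrightarrow> R i 1 = id)
   \<and> (Kden kn un 1 \<noteq> 0 \<longrightarrow> Kn 1 = id)"
proof -
  interpret affine_hecke_C_rep sc n k0 k kn T u0 un
    using assms(4-) by unfold_locales
  show ?thesis
    unfolding K0_def Kn_def R_def
    using reflection_equation_0 yang_baxter_equation reflection_equation_n
      Kop_unitary[OF hecke_generator_T0 k0_nonzero u0_nonzero]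
      Kop_unitary[OF hecke_generator_Tn kn_nonzero un_nonzero]
      Rop_unitary[OF hecke_generator_Ti k_nonzero]
      K0_R_commute Kn_R_commute R_R_commute K0_Kn_commute
      Kop_at_0[OF vector_space] Rop_at_0[OF vector_space k_nonzero]
      Kop_at_1[OF hecke_generator_T0 k0_nonzero u0_nonzero]
      Kop_at_1[OF hecke_generator_Tn kn_nonzero un_nonzero]
      Rop_at_1[OF hecke_generator_Ti k_nonzero]
    by (auto simp: k0_nonzero kn_nonzero)
qed

end
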